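(* Let $\mathcal T$ be a triangulated category and $\mathcal T^{\le0}$, $\mathcal T^{\ge0}$ full subcategories such that, for every distinguished triangle $X'\to X\to X''\xrightarrow{+1}$, if $X'$ and $X''$ belong to $\mathcal T^{\le0}$ (resp. $\mathcal T^{\ge0}$) then so does $X$. Let $M_1\to M\to M_2\xrightarrow{+1}$ be a distinguished triangle, and suppose one of the following holds: (i) $M_1\in\mathcal T^{<0}$ and there is a distinguished triangle $M_2'\to M_2\to M_2''\xrightarrow{+1}$ with $M_2'\in\mathcal T^{<0}$, $M_2''\in\mathcal T^{\ge0}$; (ii) $M_2\in\mathcal T^{\ge0}$ and there is a distinguished triangle $M_1'\to M_1\to M_1''\xrightarrow{+1}$ with $M_1'\in\mathcal T^{<0}$, $M_1''\in\mathcal T^{\ge0}$. Then there exists a distinguished triangle $M'\to M\to M''\xrightarrow{+1}$ with $M'\in\mathcal T^{<0}$ and $M''\in\mathcal T^{\ge0}$.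
   Context: $\mathcal T^{<0}$ denotes the full subcategory $\mathcal T^{\le0}[1]=\{X[1]:X\in\mathcal T^{\le0}\}$ (closed under isomorphism). *)

theory Defs
  imports Main
begin

text \<open>Objects have type 'o, morphisms
type 'm; Hom X Y is the set of morphisms X \<rightarrow> Y; comp g f is g \<circ> f.
Each Hom set is an abelian group (add, neg, zer); there is a zero object and binary
biproducts (additive category); shO/shM is the shift functor [1], required to be an
additive auto-equivalence; dist is the class of distinguished triangles
(X, Y, Z, f, g, h) meaning X -f-> Y -g-> Z -h-> X[1], subject to TR1--TR4.\<close>

record ('o, 'm) tcat =
  Ob   :: "'o set"
  Hom  :: "'o \<Rightarrow> 'o \<Rightarrow> 'm set"
  comp :: "'m \<Rightarrow> 'm \<Rightarrow> 'm"
  idm  :: "'o \<Rightarrow> 'm"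
  add  :: "'m \<Rightarrow> 'm \<Rightarrow> 'm"
  neg  :: "'m \<Rightarrow> 'm"
  zer  :: "'o \<Rightarrow> 'o \<Rightarrow> 'm"
  shO  :: "'o \<Rightarrow> 'o"
  shM  :: "'m \<Rightarrow> 'm"
  dist :: "('o \<times> 'o \<times> 'o \<times> 'm \<times> 'm \<times> 'm) set"

definition is_category :: "('o, 'm, 'x) tcat_scheme \<Rightarrow> bool" where
  "is_category C \<longleftrightarrow>
     (\<forall>X\<in>Ob C. \<forall>Y\<in>Ob C. \<forall>Z\<in>Ob C. \<forall>f\<in>Hom C X Y. \<forall>g\<in>Hom C Y Z.
         comp C g f \<in> Hom C X Z) \<and>
     (\<forall>X\<in>Ob C. idm C X \<in> Hom C X X) \<and>
     (\<forall>X\<in>Ob C. \<forall>Y\<in>Ob C. \<forall>f\<in>Hom C X Y.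
         comp C f (idm C X) = f \<and> comp C (idm C Y) f = f) \<and>
     (\<forall>W\<in>Ob C. \<forall>X\<in>Ob C. \<forall>Y\<in>Ob C. \<forall>Z\<in>Ob C.
       \<forall>f\<in>Hom C W X. \<forall>g\<in>Hom C X Y. \<forall>h\<in>Hom C Y Z.
         comp C h (comp C g f) = comp C (comp C h g) f)"

definition is_preadditive :: "('o, 'm, 'x) tcat_scheme \<Rightarrow> bool" where
  "is_preadditive C \<longleftrightarrow>
     (\<forall>X\<in>Ob C. \<forall>Y\<in>Ob C.
        zer C X Y \<in> Hom C X Y \<and>
        (\<forall>f\<in>Hom C X Y. \<forall>g\<in>Hom C X Y. add C f g \<in> Hom C X Y) \<and>
        (\<forall>f\<in>Hom C X Y. neg C f \<in> Hom C X Y) \<and>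
        (\<forall>f\<in>Hom C X Y. \<forall>g\<in>Hom C X Y. \<forall>h\<in>Hom C X Y.
            add C (add C f g) h = add C f (add C g h)) \<and>
        (\<forall>f\<in>Hom C X Y. \<forall>g\<in>Hom C X Y. add C f g = add C g f) \<and>
        (\<forall>f\<in>Hom C X Y. add C f (zer C X Y) = f) \<and>
        (\<forall>f\<in>Hom C X Y. add C f (neg C f) = zer C X Y)) \<and>
     (\<forall>X\<in>Ob C. \<forall>Y\<in>Ob C. \<forall>Z\<in>Ob C.
        (\<forall>f\<in>Hom C X Y. \<forall>g\<in>Hom C Y Z. \<forall>g'\<in>Hom C Y Z.
            comp C (add C g g') f = add C (comp C g f) (comp C g' f)) \<and>
        (\<forall>f\<in>Hom C X Y. \<forall>f'\<in>Hom C X Y. \<forall>g\<in>Hom C Y Z.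
            comp C g (add C f f') = add C (comp C g f) (comp C g f')))"

definition zero_obj :: "('o, 'm, 'x) tcat_scheme \<Rightarrow> 'o \<Rightarrow> bool" where
  "zero_obj C Z \<longleftrightarrow> Z \<in> Ob C \<and>
     (\<forall>X\<in>Ob C. Hom C Z X = {zer C Z X} \<and> Hom C X Z = {zer C X Z})"

definition is_additive :: "('o, 'm, 'x) tcat_scheme \<Rightarrow> bool" where
  "is_additive C \<longleftrightarrow> is_category C \<and> is_preadditive C \<and>
     (\<exists>Z. zero_obj C Z) \<and>
     (\<forall>X\<in>Ob C. \<forall>Y\<in>Ob C. \<exists>P\<in>Ob C.
        \<exists>i1\<in>Hom C X P. \<exists>i2\<in>Hom C Y P. \<exists>p1\<in>Hom C P X. \<exists>p2\<in>Hom C P Y.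
          comp C p1 i1 = idm C X \<and> comp C p2 i2 = idm C Y \<and>
          comp C p1 i2 = zer C Y X \<and> comp C p2 i1 = zer C X Y \<and>
          add C (comp C i1 p1) (comp C i2 p2) = idm C P)"

definition iso_mor :: "('o, 'm, 'x) tcat_scheme \<Rightarrow> 'm \<Rightarrow> 'o \<Rightarrow> 'o \<Rightarrow> bool" where
  "iso_mor C f X Y \<longleftrightarrow> f \<in> Hom C X Y \<and>
     (\<exists>g\<in>Hom C Y X. comp C g f = idm C X \<and> comp C f g = idm C Y)"

definition shift_ok :: "('o, 'm, 'x) tcat_scheme \<Rightarrow> bool" where
  "shift_ok C \<longleftrightarrow>
     (\<forall>X\<in>Ob C. shO C X \<in> Ob C) \<and>
     (\<forall>X\<in>Ob C. \<forall>Y\<in>Ob C. bij_betw (shM C) (Hom C X Y) (Hom C (shO C X) (shO C Y))) \<and>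
     (\<forall>X\<in>Ob C. shM C (idm C X) = idm C (shO C X)) \<and>
     (\<forall>X\<in>Ob C. \<forall>Y\<in>Ob C. \<forall>Z\<in>Ob C. \<forall>f\<in>Hom C X Y. \<forall>g\<in>Hom C Y Z.
        shM C (comp C g f) = comp C (shM C g) (shM C f)) \<and>
     (\<forall>X\<in>Ob C. \<forall>Y\<in>Ob C. \<forall>f\<in>Hom C X Y. \<forall>g\<in>Hom C X Y.
        shM C (add C f g) = add C (shM C f) (shM C g)) \<and>
     (\<forall>Y\<in>Ob C. \<exists>X\<in>Ob C. \<exists>u. iso_mor C u (shO C X) Y)"

definition triangle :: "('o, 'm, 'x) tcat_scheme \<Rightarrow> 'o \<times> 'o \<times> 'o \<times> 'm \<times> 'm \<times> 'm \<Rightarrow> bool" where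
  "triangle C T \<longleftrightarrow> (case T of (X, Y, Z, f, g, h) \<Rightarrow>
     X \<in> Ob C \<and> Y \<in> Ob C \<and> Z \<in> Ob C \<and>
     f \<in> Hom C X Y \<and> g \<in> Hom C Y Z \<and> h \<in> Hom C Z (shO C X))"

definition tri_mor :: "('o, 'm, 'x) tcat_scheme \<Rightarrow> 'o \<times> 'o \<times> 'o \<times> 'm \<times> 'm \<times> 'm
     \<Rightarrow> 'o \<times> 'o \<times> 'o \<times> 'm \<times> 'm \<times> 'm \<Rightarrow> 'm \<Rightarrow> 'm \<Rightarrow> 'm \<Rightarrow> bool" where
  "tri_mor C T T' a b c \<longleftrightarrow> (case T of (X, Y, Z, f, g, h) \<Rightarrow> case T' of (X', Y', Z', f', g', h') \<Rightarrow>
     a \<in> Hom C X X' \<and> b \<in> Hom C Y Y' \<and> c \<in> Hom C Z Z' \<and>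
     comp C b f = comp C f' a \<and> comp C c g = comp C g' b \<and>
     comp C (shM C a) h = comp C h' c)"

definition triangulated :: "('o, 'm, 'x) tcat_scheme \<Rightarrow> bool" where
  "triangulated C \<longleftrightarrow> is_additive C \<and> shift_ok C \<and>
     \<comment> \<open>distinguished triangles are triangles\<close>
     (\<forall>T\<in>dist C. triangle C T) \<and>
     \<comment> \<open>TR1: closure under isomorphism\<close>
     (\<forall>T T' a b c. T \<in> dist C \<and> triangle C T' \<and> tri_mor C T T' a b c \<and>
        iso_mor C a (fst T) (fst T') \<and> iso_mor C b (fst (snd T)) (fst (snd T')) \<and>
        iso_mor C c (fst (snd (snd T))) (fst (snd (snd T'))) \<longrightarrow> T' \<in> dist C) \<and>
     \<comment> \<open>TR1: X --id--> X --> 0 --> X[1]\<close>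
     (\<forall>X\<in>Ob C. \<forall>Z. zero_obj C Z \<longrightarrow>
        (X, X, Z, idm C X, zer C X Z, zer C Z (shO C X)) \<in> dist C) \<and>
     \<comment> \<open>TR1: every morphism embeds in a distinguished triangle\<close>
     (\<forall>X\<in>Ob C. \<forall>Y\<in>Ob C. \<forall>f\<in>Hom C X Y. \<exists>Z g h. (X, Y, Z, f, g, h) \<in> dist C) \<and>
     \<comment> \<open>TR2: rotation\<close>
     (\<forall>X Y Z f g h. triangle C (X, Y, Z, f, g, h) \<longrightarrow>
        ((X, Y, Z, f, g, h) \<in> dist C \<longleftrightarrow>
         (Y, Z, shO C X, g, h, neg C (shM C f)) \<in> dist C)) \<and>
     \<comment> \<open>TR3: completion of morphisms\<close>
     (\<forall>X Y Z f g h X' Y' Z' f' g' h' a b.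
        (X, Y, Z, f, g, h) \<in> dist C \<and> (X', Y', Z', f', g', h') \<in> dist C \<and>
        a \<in> Hom C X X' \<and> b \<in> Hom C Y Y' \<and> comp C b f = comp C f' a \<longrightarrow>
        (\<exists>c. tri_mor C (X, Y, Z, f, g, h) (X', Y', Z', f', g', h') a b c)) \<and>
     \<comment> \<open>TR4: octahedral axiom\<close>
     (\<forall>X Y Z f g Z' u h X' v k Y' w l.
        f \<in> Hom C X Y \<and> g \<in> Hom C Y Z \<and>
        (X, Y, Z', f, u, h) \<in> dist C \<and> (Y, Z, X', g, v, k) \<in> dist C \<and>
        (X, Z, Y', comp C g f, w, l) \<in> dist C \<longrightarrow>
        (\<exists>a b. (Z', Y', X', a, b, comp C (shM C u) k) \<in> dist C \<and>
           comp C a u = comp C w g \<and> comp C l a = h \<and>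
           comp C b w = v \<and> comp C k b = comp C (shM C f) l))"

text \<open>T^{<0} = T^{\<le>0}[1], closed under isomorphism.\<close>
definition lt0 :: "('o, 'm, 'x) tcat_scheme \<Rightarrow> 'o set \<Rightarrow> 'o set" where
  "lt0 C A = {Y \<in> Ob C. \<exists>X\<in>A. \<exists>u. iso_mor C u (shO C X) Y}"

end

theory Submission
  imports Defs
begin

(* Both cases come from the octahedral axiom applied to a composite of two morphisms.
   In case (ii) the cone Y of M1' -> M1 -> M sits in a triangle M1'' -> Y -> M2, so Y is in
   T^{>=0} by closure under extensions, and the cone triangle of M1' -> M is the one sought.
   In case (i) the cone Y of M -> M2 -> M2'' sits in a triangle M1[1] -> Y -> M2'[1].
   Closure under extensions passes from T^{<=0} to T^{<0} and then to T^{<0}[1], so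
   Y = X[1] up to isomorphism with X in T^{<0}, and rotating the cone triangle of M -> M2''
   backwards gives X -> M -> M2''. *)

definition extension_closed :: "('o, 'm, 'x) tcat_scheme \<Rightarrow> 'o set \<Rightarrow> bool" where
  "extension_closed C K \<longleftrightarrow>
     (\<forall>X' X X'' f g h. (X', X, X'', f, g, h) \<in> dist C \<longrightarrow> X' \<in> K \<longrightarrow> X'' \<in> K \<longrightarrow> X \<in> K)"

definition decomposable :: "('o, 'm, 'x) tcat_scheme \<Rightarrow> 'o set \<Rightarrow> 'o set \<Rightarrow> 'o \<Rightarrow> bool" where
  "decomposable C A B M \<longleftrightarrow>
     (\<exists>M' M'' a b c. (M', M, M'', a, b, c) \<in> dist C \<and> M' \<in> lt0 C A \<and> M'' \<in> B)"

locale triangulated_category =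
  fixes C :: "('o, 'm, 'x) tcat_scheme"
  assumes triangulated: "triangulated C"
begin

lemma category: "is_category C"
  using triangulated unfolding triangulated_def is_additive_def by blast

lemma preadditive: "is_preadditive C"
  using triangulated unfolding triangulated_def is_additive_def by blast

lemma shift: "shift_ok C"
  using triangulated unfolding triangulated_def by blast

lemma comp_in_Hom:
  "\<lbrakk>X \<in> Ob C; Y \<in> Ob C; Z \<in> Ob C; f \<in> Hom C X Y; g \<in> Hom C Y Z\<rbrakk> \<Longrightarrow> comp C g f \<in> Hom C X Z"
  using category unfolding is_category_def by blast

lemma idm_in_Hom: "X \<in> Ob C \<Longrightarrow> idm C X \<in> Hom C X X"
  using category unfolding is_category_def by blast

lemma comp_idm_right: "\<lbrakk>X \<in> Ob C; Y \<in> Ob C; f \<in> Hom C X Y\<rbrakk> \<Longrightarrow> comp C f (idm C X) = f"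
  using category unfolding is_category_def by blast

lemma comp_idm_left: "\<lbrakk>X \<in> Ob C; Y \<in> Ob C; f \<in> Hom C X Y\<rbrakk> \<Longrightarrow> comp C (idm C Y) f = f"
  using category unfolding is_category_def by blast

lemma comp_assoc:
  "\<lbrakk>W \<in> Ob C; X \<in> Ob C; Y \<in> Ob C; Z \<in> Ob C; f \<in> Hom C W X; g \<in> Hom C X Y; h \<in> Hom C Y Z\<rbrakk>
    \<Longrightarrow> comp C h (comp C g f) = comp C (comp C h g) f"
  using category unfolding is_category_def by blast

lemma iso_mor_idm: "X \<in> Ob C \<Longrightarrow> iso_mor C (idm C X) X X"
  unfolding iso_mor_def using idm_in_Hom comp_idm_left by metis

lemma neg_in_Hom: "\<lbrakk>X \<in> Ob C; Y \<in> Ob C; f \<in> Hom C X Y\<rbrakk> \<Longrightarrow> neg C f \<in> Hom C X Y"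
  using preadditive unfolding is_preadditive_def by blast

lemma zer_in_Hom: "\<lbrakk>X \<in> Ob C; Y \<in> Ob C\<rbrakk> \<Longrightarrow> zer C X Y \<in> Hom C X Y"
  using preadditive unfolding is_preadditive_def by blast

lemma hom_add_assoc:
  "\<lbrakk>X \<in> Ob C; Y \<in> Ob C; f \<in> Hom C X Y; g \<in> Hom C X Y; h \<in> Hom C X Y\<rbrakk>
    \<Longrightarrow> add C (add C f g) h = add C f (add C g h)"
  using preadditive unfolding is_preadditive_def by blast

lemma hom_add_commute:
  "\<lbrakk>X \<in> Ob C; Y \<in> Ob C; f \<in> Hom C X Y; g \<in> Hom C X Y\<rbrakk> \<Longrightarrow> add C f g = add C g f"
  using preadditive unfolding is_preadditive_def by blast

lemma hom_add_zer: "\<lbrakk>X \<in> Ob C; Y \<in> Ob C; f \<in> Hom C X Y\<rbrakk> \<Longrightarrow> add C f (zer C X Y) = f"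
  using preadditive unfolding is_preadditive_def by blast

lemma hom_add_neg:
  "\<lbrakk>X \<in> Ob C; Y \<in> Ob C; f \<in> Hom C X Y\<rbrakk> \<Longrightarrow> add C f (neg C f) = zer C X Y"
  using preadditive unfolding is_preadditive_def by blast

lemma neg_neg:
  assumes X: "X \<in> Ob C" and Y: "Y \<in> Ob C" and f: "f \<in> Hom C X Y"
  shows "neg C (neg C f) = f"
proof -
  let ?g = "neg C f" and ?h = "neg C (neg C f)"
  have g: "?g \<in> Hom C X Y" and h: "?h \<in> Hom C X Y"
    using neg_in_Hom[OF X Y] f by blast+
  have "f = add C f (add C ?g ?h)" using hom_add_zer[OF X Y f] hom_add_neg[OF X Y g] by simp
  also have "\<dots> = add C (zer C X Y) ?h" using hom_add_assoc[OF X Y f g h] hom_add_neg[OF X Y f] by simp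
  also have "\<dots> = ?h" using hom_add_commute[OF X Y zer_in_Hom[OF X Y] h] hom_add_zer[OF X Y h] by simp
  finally show ?thesis by simp
qed

lemma shO_in_Ob: "X \<in> Ob C \<Longrightarrow> shO C X \<in> Ob C"
  using shift unfolding shift_ok_def by blast

lemma shM_idm: "X \<in> Ob C \<Longrightarrow> shM C (idm C X) = idm C (shO C X)"
  using shift unfolding shift_ok_def by blast

lemma shM_full:
  assumes "X \<in> Ob C" "Y \<in> Ob C" "g \<in> Hom C (shO C X) (shO C Y)"
  shows "\<exists>f\<in>Hom C X Y. shM C f = g"
proof -
  have "bij_betw (shM C) (Hom C X Y) (Hom C (shO C X) (shO C Y))"
    using shift assms unfolding shift_ok_def by blast
  then have "g \<in> shM C ` Hom C X Y" using assms(3) by (simp add: bij_betw_def)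
  then show ?thesis by blast
qed

lemma shO_essentially_surjective: "Y \<in> Ob C \<Longrightarrow> \<exists>X\<in>Ob C. \<exists>u. iso_mor C u (shO C X) Y"
  using shift unfolding shift_ok_def by blast

lemma dist_triangle:
  assumes "(X, Y, Z, f, g, h) \<in> dist C"
  shows "X \<in> Ob C" "Y \<in> Ob C" "Z \<in> Ob C"
    and "f \<in> Hom C X Y" "g \<in> Hom C Y Z" "h \<in> Hom C Z (shO C X)"
proof -
  have "\<forall>T\<in>dist C. triangle C T"
    using triangulated unfolding triangulated_def by (elim conjE) assumption
  with assms show "X \<in> Ob C" "Y \<in> Ob C" "Z \<in> Ob C"
    and "f \<in> Hom C X Y" "g \<in> Hom C Y Z" "h \<in> Hom C Z (shO C X)"
    unfolding triangle_def by fastforce+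
qed

lemma dist_iso_closed:
  "\<lbrakk>T \<in> dist C; triangle C T'; tri_mor C T T' a b c;
    iso_mor C a (fst T) (fst T'); iso_mor C b (fst (snd T)) (fst (snd T'));
    iso_mor C c (fst (snd (snd T))) (fst (snd (snd T')))\<rbrakk> \<Longrightarrow> T' \<in> dist C"
  using triangulated unfolding triangulated_def by (elim conjE) blast

lemma cone_exists:
  "\<lbrakk>X \<in> Ob C; Y \<in> Ob C; f \<in> Hom C X Y\<rbrakk> \<Longrightarrow> \<exists>Z g h. (X, Y, Z, f, g, h) \<in> dist C"
  using triangulated unfolding triangulated_def by (elim conjE) blast

lemma dist_rotate_iff:
  "triangle C (X, Y, Z, f, g, h) \<Longrightarrow>
     (X, Y, Z, f, g, h) \<in> dist C \<longleftrightarrow> (Y, Z, shO C X, g, h, neg C (shM C f)) \<in> dist C"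
  using triangulated unfolding triangulated_def by (elim conjE) fast

lemma dist_rotate:
  assumes "(X, Y, Z, f, g, h) \<in> dist C"
  shows "(Y, Z, shO C X, g, h, neg C (shM C f)) \<in> dist C"
  using assms dist_rotate_iff dist_triangle[OF assms] by (simp add: triangle_def)

lemma octahedral:
  assumes "f \<in> Hom C X Y" "g \<in> Hom C Y Z" "(X, Y, Z', f, u, h) \<in> dist C"
    "(Y, Z, X', g, v, k) \<in> dist C" "(X, Z, Y', comp C g f, w, l) \<in> dist C"
  shows "\<exists>a b. (Z', Y', X', a, b, comp C (shM C u) k) \<in> dist C"
  using triangulated assms unfolding triangulated_def by (elim conjE) fast

lemma dist_replace_third_iso:
  assumes d: "(A, B, D, \<alpha>, \<beta>, \<gamma>) \<in> dist C" and D': "D' \<in> Ob C" and u: "iso_mor C u D' D"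
  shows "\<exists>\<beta>'. (A, B, D', \<alpha>, \<beta>', comp C \<gamma> u) \<in> dist C"
proof -
  obtain v where v: "v \<in> Hom C D D'" "comp C u v = idm C D" and u_Hom: "u \<in> Hom C D' D"
    and iso_v: "iso_mor C v D D'"
    using u unfolding iso_mor_def by blast
  note ob = dist_triangle[OF d]
  have A1: "shO C A \<in> Ob C" using shO_in_Ob ob(1) .
  have v\<beta>: "comp C v \<beta> \<in> Hom C B D'" and \<gamma>u: "comp C \<gamma> u \<in> Hom C D' (shO C A)"
    using comp_in_Hom ob D' A1 v u_Hom by blast+
  have "comp C (comp C \<gamma> u) v = comp C \<gamma> (comp C u v)"
    using comp_assoc[of D D' D "shO C A" v u \<gamma>] ob D' A1 v u_Hom by simp
  also have "\<dots> = \<gamma>" using v(2) comp_idm_right ob A1 by simp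
  finally have "comp C (shM C (idm C A)) \<gamma> = comp C (comp C \<gamma> u) v"
    using shM_idm comp_idm_left ob A1 by simp
  then have "tri_mor C (A, B, D, \<alpha>, \<beta>, \<gamma>) (A, B, D', \<alpha>, comp C v \<beta>, comp C \<gamma> u)
      (idm C A) (idm C B) v"
    unfolding tri_mor_def using ob D' v v\<beta> idm_in_Hom comp_idm_left comp_idm_right by simp
  then have "(A, B, D', \<alpha>, comp C v \<beta>, comp C \<gamma> u) \<in> dist C"
    using dist_iso_closed[OF d] ob D' v\<beta> \<gamma>u iso_mor_idm iso_v by (simp add: triangle_def)
  then show ?thesis by blast
qed

lemma dist_rotate_back:
  assumes d: "(A, B, D, \<alpha>, \<beta>, \<gamma>) \<in> dist C" and X: "X \<in> Ob C"
    and u: "iso_mor C u (shO C X) D"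
  shows "\<exists>f \<beta>'. (X, A, B, f, \<alpha>, \<beta>') \<in> dist C"
proof -
  obtain \<beta>' where d': "(A, B, shO C X, \<alpha>, \<beta>', comp C \<gamma> u) \<in> dist C"
    using dist_replace_third_iso[OF d shO_in_Ob[OF X] u] by blast
  note ob = dist_triangle[OF d']
  have X1: "shO C X \<in> Ob C" and A1: "shO C A \<in> Ob C" using shO_in_Ob X ob(1) by blast+
  obtain f where f: "f \<in> Hom C X A" "shM C f = neg C (comp C \<gamma> u)"
    using shM_full[OF X ob(1)] neg_in_Hom[OF X1 A1 ob(6)] by blast
  have "neg C (shM C f) = comp C \<gamma> u" using f(2) neg_neg[OF X1 A1 ob(6)] by simp
  then have "(X, A, B, f, \<alpha>, \<beta>') \<in> dist C"
    using dist_rotate_iff[of X A B f \<alpha> \<beta>'] d' ob X f(1) by (simp add: triangle_def)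
  then show ?thesis by blast
qed

lemma shO_in_lt0: "\<lbrakk>K \<subseteq> Ob C; X \<in> K\<rbrakk> \<Longrightarrow> shO C X \<in> lt0 C K"
  unfolding lt0_def using shO_in_Ob iso_mor_idm by blast

lemma lt0_extension_closed:
  assumes K: "K \<subseteq> Ob C" and ext: "extension_closed C K"
  shows "extension_closed C (lt0 C K)"
  unfolding extension_closed_def
proof (intro allI impI)
  fix P Q R \<alpha> \<beta> \<gamma>
  assume d: "(P, Q, R, \<alpha>, \<beta>, \<gamma>) \<in> dist C" and P: "P \<in> lt0 C K" and R: "R \<in> lt0 C K"
  obtain X1 u1 where X1: "X1 \<in> K" "iso_mor C u1 (shO C X1) P" using P unfolding lt0_def by blast
  obtain X3 u3 where X3: "X3 \<in> K" "iso_mor C u3 (shO C X3) R" using R unfolding lt0_def by blast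
  have Q: "Q \<in> Ob C" using dist_triangle(2)[OF d] .
  (* Rotating backwards three times turns P -> Q -> R into X1 -> Y -> X3, where Q = Y[1]. *)
  obtain Y u where Y: "Y \<in> Ob C" "iso_mor C u (shO C Y) Q"
    using shO_essentially_surjective[OF Q] by blast
  obtain f1 \<beta>1 where d1: "(X3, P, Q, f1, \<alpha>, \<beta>1) \<in> dist C"
    using dist_rotate_back[OF d _ X3(2)] X3(1) K by blast
  obtain f2 \<beta>2 where d2: "(Y, X3, P, f2, f1, \<beta>2) \<in> dist C"
    using dist_rotate_back[OF d1 Y] by blast
  obtain f3 \<beta>3 where d3: "(X1, Y, X3, f3, f2, \<beta>3) \<in> dist C"
    using dist_rotate_back[OF d2 _ X1(2)] X1(1) K by blast
  have "Y \<in> K" using ext d3 X1(1) X3(1) unfolding extension_closed_def by blast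
  then show "Q \<in> lt0 C K" using Q Y unfolding lt0_def by blast
qed

lemma decomposable_if_ge0_right:
  assumes B: "extension_closed C B" and M: "(M1, M, M2, f, g, h) \<in> dist C"
    and M2: "M2 \<in> B" and M1: "decomposable C A B M1"
  shows "decomposable C A B M"
proof -
  obtain M1' M1'' a b c where d: "(M1', M1, M1'', a, b, c) \<in> dist C"
    and M1': "M1' \<in> lt0 C A" and M1'': "M1'' \<in> B"
    using M1 unfolding decomposable_def by blast
  note ob = dist_triangle[OF d] dist_triangle[OF M]
  obtain Y w l where cone: "(M1', M, Y, comp C f a, w, l) \<in> dist C"
    using cone_exists comp_in_Hom ob by meson
  obtain p q where "(M1'', Y, M2, p, q, comp C (shM C b) h) \<in> dist C"
    using octahedral[OF _ _ d M cone] ob by blast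
  then have "Y \<in> B" using B M1'' M2 unfolding extension_closed_def by blast
  then show ?thesis using cone M1' unfolding decomposable_def by blast
qed

lemma decomposable_if_lt0_left:
  assumes A: "A \<subseteq> Ob C" "extension_closed C A" and M: "(M1, M, M2, f, g, h) \<in> dist C"
    and M1: "M1 \<in> lt0 C A" and M2: "decomposable C A B M2"
  shows "decomposable C A B M"
proof -
  obtain M2' M2'' a b c where d: "(M2', M2, M2'', a, b, c) \<in> dist C"
    and M2': "M2' \<in> lt0 C A" and M2'': "M2'' \<in> B"
    using M2 unfolding decomposable_def by blast
  note ob = dist_triangle[OF d] dist_triangle[OF M]
  have lt0_Ob: "lt0 C A \<subseteq> Ob C" unfolding lt0_def by blast
  obtain Y w l where cone: "(M, M2'', Y, comp C b g, w, l) \<in> dist C"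
    using cone_exists comp_in_Hom ob by meson
  obtain p q where
    "(shO C M1, Y, shO C M2', p, q, comp C (shM C h) (neg C (shM C a))) \<in> dist C"
    using octahedral[OF _ _ dist_rotate[OF M] dist_rotate[OF d] cone] ob by blast
  moreover have "extension_closed C (lt0 C (lt0 C A))"
    using lt0_extension_closed[OF lt0_Ob lt0_extension_closed[OF A]] .
  moreover have "shO C M1 \<in> lt0 C (lt0 C A)" "shO C M2' \<in> lt0 C (lt0 C A)"
    using shO_in_lt0[OF lt0_Ob] M1 M2' by blast+
  ultimately have "Y \<in> lt0 C (lt0 C A)" unfolding extension_closed_def by blast
  then obtain X u where X: "X \<in> lt0 C A" "iso_mor C u (shO C X) Y" unfolding lt0_def by blast
  obtain f' c' where "(X, M, M2'', f', comp C b g, c') \<in> dist C"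
    using dist_rotate_back[OF cone _ X(2)] X(1) lt0_Ob by blast
  then show ?thesis using X(1) M2'' unfolding decomposable_def by blast
qed

end

theorem lemma2p1:
  fixes C :: "('o, 'm) tcat" and Ale Bge :: "'o set"
  assumes tri: "triangulated C"
    and subA: "Ale \<subseteq> Ob C" and subB: "Bge \<subseteq> Ob C"
    and extA: "\<forall>X' X X'' f g h. (X', X, X'', f, g, h) \<in> dist C \<longrightarrow>
                  X' \<in> Ale \<longrightarrow> X'' \<in> Ale \<longrightarrow> X \<in> Ale"
    and extB: "\<forall>X' X X'' f g h. (X', X, X'', f, g, h) \<in> dist C \<longrightarrow>
                  X' \<in> Bge \<longrightarrow> X'' \<in> Bge \<longrightarrow> X \<in> Bge"
    and M: "(M1, M, M2, f, g, h) \<in> dist C"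
    and cases: "(M1 \<in> lt0 C Ale \<and>
                 (\<exists>M2' M2'' a b c. (M2', M2, M2'', a, b, c) \<in> dist C \<and>
                     M2' \<in> lt0 C Ale \<and> M2'' \<in> Bge))
              \<or> (M2 \<in> Bge \<and>
                 (\<exists>M1' M1'' a b c. (M1', M1, M1'', a, b, c) \<in> dist C \<and>
                     M1' \<in> lt0 C Ale \<and> M1'' \<in> Bge))"
  shows "\<exists>M' M'' a b c. (M', M, M'', a, b, c) \<in> dist C \<and>
           M' \<in> lt0 C Ale \<and> M'' \<in> Bge"
proof -
  interpret triangulated_category C using tri by (rule triangulated_category.intro)
  have "extension_closed C Ale" "extension_closed C Bge"
    unfolding extension_closed_def using extA extB by blast+
  moreover have "M1 \<in> lt0 C Ale \<and> decomposable C Ale Bge M2 \<or> M2 \<in> Bge \<and> decomposable C Ale Bge M1"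
    using cases unfolding decomposable_def .
  ultimately have "decomposable C Ale Bge M"
    using decomposable_if_lt0_left[OF subA _ M] decomposable_if_ge0_right[OF _ M] by blast
  then show ?thesis unfolding decomposable_def .
qed

end
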